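(* Let $f_1,\dots,f_M:\mathbb{R}\to[0,1]$ be cumulative distribution functions and $w_1,\dots,w_M\in\mathbb{R}$ real weights (not necessarily positive), and let $F(x)=\sum_{i=1}^M w_i f_i(x)$. For $1\le M'<M$ write $F(x)=F_{M'}(x)+R_{M'}(x)$ with $F_{M'}(x)=\sum_{i=1}^{M'} w_i f_i(x)$ and $R_{M'}(x)=\sum_{i=M'+1}^M w_i f_i(x)$, and set \[\epsilon_-=\sum_{i=M'+1}^M [w_i]_-\le 0,\qquad \epsilon_+=\sum_{i=M'+1}^M [w_i]_+\ge 0.\] Then for every $x$, $R_{M'}(x)\in[\epsilon_-,\epsilon_+]$. Moreover, assuming $F$ and $F_{M'}$ are continuous and strictly increasing with quantile functions $F^{-1}$, $F_{M'}^{-1}$, for $p\in(0,1)$ with $p+\epsilon_-,\,p+\epsilon_+\in(0,1)$, \[F^{-1}(p+\epsilon_-)\le F_{M'}^{-1}(p)\le F^{-1}(p+\epsilon_+).\]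
   Context: $[w]_+=\max(w,0)$ and $[w]_-=\min(w,0)$. For a continuous strictly increasing function $G$, $G^{-1}(q)$ denotes the unique $x$ with $G(x)=q$. Such mixtures with signed weights arise from sparse grid quadrature. *)

theory Defs
  imports Complex_Main
begin

definition is_cdf :: "(real \<Rightarrow> real) \<Rightarrow> bool" where
  "is_cdf f \<longleftrightarrow> mono f \<and> (\<forall>x. continuous (at_right x) f)
     \<and> (f \<longlongrightarrow> 0) at_bot \<and> (f \<longlongrightarrow> 1) at_top"

definition pos_part :: "real \<Rightarrow> real" where "pos_part w = max w 0"
definition neg_part :: "real \<Rightarrow> real" where "neg_part w = min w 0"

definition quantile :: "(real \<Rightarrow> real) \<Rightarrow> real \<Rightarrow> real" where
  "quantile G q = (THE x. G x = q)"

end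

theory Submission
  imports Defs
begin

text \<open>Since every CDF takes values in [0,1], each tail term w_i f_i(x) lies between
  [w_i]_- and [w_i]_+, so the remainder F - F_M' is squeezed into [eps_-, eps_+].
  Evaluating at x = F_M'^-1(p) gives F(x) in [p + eps_-, p + eps_+], and the
  quantile of the strictly increasing F is monotone, which yields the bounds.\<close>

lemma is_cdf_nonneg:
  assumes "is_cdf f" shows "0 \<le> f x"
proof -
  have mono: "mono f" and lim: "(f \<longlongrightarrow> 0) at_bot"
    using assms unfolding is_cdf_def by auto
  have "eventually (\<lambda>y. f y \<le> f x) at_bot"
    using eventually_le_at_bot[of x] by (rule eventually_mono) (rule monoD[OF mono])
  then show ?thesis
    using tendsto_le[OF trivial_limit_at_bot_linorder tendsto_const lim] by blast
qed

lemma is_cdf_le_one: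
  assumes "is_cdf f" shows "f x \<le> 1"
proof -
  have mono: "mono f" and lim: "(f \<longlongrightarrow> 1) at_top"
    using assms unfolding is_cdf_def by auto
  have "eventually (\<lambda>y. f x \<le> f y) at_top"
    using eventually_ge_at_top[of x] by (rule eventually_mono) (rule monoD[OF mono])
  then show ?thesis
    using tendsto_le[OF trivial_limit_at_top_linorder lim tendsto_const] by blast
qed

lemma neg_part_le_mult:
  assumes "0 \<le> a" "a \<le> 1" shows "neg_part w \<le> w * a"
  using assms unfolding neg_part_def
  by (cases "w \<ge> 0") (auto simp: mult_le_cancel_left2)

lemma mult_le_pos_part:
  assumes "0 \<le> a" "a \<le> 1" shows "w * a \<le> pos_part w"
  using assms unfolding pos_part_def
  by (cases "w \<ge> 0") (auto simp: mult_left_le mult_nonpos_nonneg)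

lemma sum_weighted_unit_bounds:
  assumes "\<And>i. i \<in> I \<Longrightarrow> 0 \<le> g i \<and> g i \<le> 1"
  shows "(\<Sum>i\<in>I. w i * g i) \<in> {(\<Sum>i\<in>I. neg_part (w i))..(\<Sum>i\<in>I. pos_part (w i))}"
  using assms by (auto intro!: sum_mono neg_part_le_mult mult_le_pos_part)

lemma quantile_eqI:
  assumes "strict_mono G" "G x = q" shows "quantile G q = x"
  unfolding quantile_def
  using assms by (auto intro!: the_equality dest: strict_mono_eq)

lemma quantile_mono:
  assumes "strict_mono G" "q \<le> r" "q \<in> range G" "r \<in> range G"
  shows "quantile G q \<le> quantile G r"
  using assms by (auto simp: quantile_eqI strict_mono_less_eq)

lemma quantile_perturbation_bounds:
  assumes F: "strict_mono F" and G: "strict_mono G"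
    and diff: "\<And>x. F x - G x \<in> {a..b}"
    and p: "p \<in> range G" "p + a \<in> range F" "p + b \<in> range F"
  shows "quantile F (p + a) \<le> quantile G p \<and> quantile G p \<le> quantile F (p + b)"
proof -
  obtain x where x: "G x = p" using p(1) by blast
  have qG: "quantile G p = x" using quantile_eqI[OF G x] .
  have qF: "quantile F (F x) = x" using quantile_eqI[OF F] by blast
  have "p + a \<le> F x" "F x \<le> p + b" using diff[of x] x by auto
  then show ?thesis
    using quantile_mono[OF F] p qF qG by (metis rangeI)
qed

theorem proposition2:
  fixes f :: "nat \<Rightarrow> real \<Rightarrow> real" and w :: "nat \<Rightarrow> real" and M M' :: nat
  assumes cdf: "\<And>i. i \<in> {1..M} \<Longrightarrow> is_cdf (f i)"
    and M': "1 \<le> M'" "M' < M"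
  defines "F \<equiv> (\<lambda>x. \<Sum>i=1..M. w i * f i x)"
    and "FM \<equiv> (\<lambda>x. \<Sum>i=1..M'. w i * f i x)"
    and "R \<equiv> (\<lambda>x. \<Sum>i=M'+1..M. w i * f i x)"
    and "eps_minus \<equiv> (\<Sum>i=M'+1..M. neg_part (w i))"
    and "eps_plus \<equiv> (\<Sum>i=M'+1..M. pos_part (w i))"
  shows "(\<forall>x. F x = FM x + R x \<and> R x \<in> {eps_minus..eps_plus})
    \<and> ((continuous_on UNIV F \<and> strict_mono F \<and> continuous_on UNIV FM \<and> strict_mono FM) \<longrightarrow>
        (\<forall>p. p \<in> {0<..<1} \<and> p + eps_minus \<in> {0<..<1} \<and> p + eps_plus \<in> {0<..<1}
             \<and> p \<in> range FM \<and> p + eps_minus \<in> range F \<and> p + eps_plus \<in> range F \<longrightarrow>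
           quantile F (p + eps_minus) \<le> quantile FM p \<and> quantile FM p \<le> quantile F (p + eps_plus)))"
proof -
  have split: "F x = FM x + R x" for x
    using sum.ub_add_nat[of 1 M' "\<lambda>i. w i * f i x" "M - M'"] M'
    unfolding F_def FM_def R_def by simp
  have R_bounds: "R x \<in> {eps_minus..eps_plus}" for x
    unfolding R_def eps_minus_def eps_plus_def
    using M' by (intro sum_weighted_unit_bounds) (simp add: is_cdf_nonneg is_cdf_le_one cdf)
  have "F x - FM x \<in> {eps_minus..eps_plus}" for x
    using split R_bounds by simp
  then show ?thesis
    using split R_bounds quantile_perturbation_bounds[of F FM eps_minus eps_plus] by blast
qed

end
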